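(* Let $\{P^{[s,t]}_{ij,k}\}$, with initial point $x^{(0)}\in S$, be a discrete time quadratic stochastic process of type (A) or of type (B). For integers $0\le m<n$ and $i,j\in\mathbb{N}$ define $\mathbb{H}^{m,n}_{ij}=\sum_{l=1}^\infty P^{[m,n]}_{il,j}x^{(m)}_l$. Then each $(\mathbb{H}^{m,n}_{ij})_{i,j}$ is a stochastic matrix and the family $\{\mathbb{H}^{m,n}_{ij}\}$ is a Markov process, i.e. $\mathbb{H}^{m,l}_{ij}=\sum_{k=1}^\infty \mathbb{H}^{m,n}_{ik}\mathbb{H}^{n,l}_{kj}$ for all $m<n<l$ and all $i,j\in\mathbb{N}$.
   Context: $\mathbb{N}=\{1,2,\dots\}$; times are nonnegative integers. $\ell^1$ is the space of real sequences $x=(x_n)_{n\in\mathbb{N}}$ with $\|x\|_1=\sum_n|x_n|<\infty$, and $S=\{x\in\ell^1:x_n\ge0,\ \|x\|_1=1\}$. A discrete time quadratic stochastic process (q.s.p.) consists of an initial point $x^{(0)}=(x^{(0)}_n)\in S$ and numbers $P^{[s,t]}_{ij,k}$ ($i,j,k\in\mathbb{N}$; $s,t$ nonnegative integers with $t-s\ge1$) such that for all $s,t$: (1) $P^{[s,t]}_{ij,k}=P^{[s,t]}_{ji,k}$; (2) $P^{[s,t]}_{ij,k}\ge0$ and $\sum_{k=1}^\infty P^{[s,t]}_{ij,k}=1$; and (3) one of the following holds for all $s<r<t$ and all $i,j,k$: type (A): $P^{[s,t]}_{ij,k}=\sum_{m,l=1}^\infty P^{[s,r]}_{ij,m}P^{[r,t]}_{ml,k}x^{(r)}_l$;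 type (B): $P^{[s,t]}_{ij,k}=\sum_{m,l,g,h=1}^\infty P^{[s,r]}_{im,l}P^{[s,r]}_{jg,h}P^{[r,t]}_{lh,k}x^{(s)}_m x^{(s)}_g$. Here for $r\ge1$, $x^{(r)}_k=\sum_{i,j=1}^\infty P^{[0,r]}_{ij,k}x^{(0)}_ix^{(0)}_j$. A matrix is stochastic if its entries are nonnegative and each row sums to 1. *)

theory Defs
  imports "HOL-Analysis.Analysis"
begin

text \<open>Indices range over the positive naturals {1..}; times are nat.
  A process is encoded as P s t i j k  (for P^{[s,t]}_{ij,k}) and an initial point x0.\<close>

definition simplex_S :: "(nat \<Rightarrow> real) \<Rightarrow> bool" where
  "simplex_S x \<longleftrightarrow> (\<forall>n\<ge>1. x n \<ge> 0) \<and> x summable_on {1..} \<and> (\<Sum>\<^sub>\<infinity>n\<in>{1..}. x n) = 1"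

definition qsp_state :: "(nat \<Rightarrow> nat \<Rightarrow> nat \<Rightarrow> nat \<Rightarrow> nat \<Rightarrow> real) \<Rightarrow> (nat \<Rightarrow> real) \<Rightarrow> nat \<Rightarrow> nat \<Rightarrow> real" where
  "qsp_state P x0 r k = (if r = 0 then x0 k
     else (\<Sum>\<^sub>\<infinity>(i,j)\<in>{1..}\<times>{1..}. P 0 r i j k * x0 i * x0 j))"

definition qsp_basic :: "(nat \<Rightarrow> nat \<Rightarrow> nat \<Rightarrow> nat \<Rightarrow> nat \<Rightarrow> real) \<Rightarrow> (nat \<Rightarrow> real) \<Rightarrow> bool" where
  "qsp_basic P x0 \<longleftrightarrow> simplex_S x0
    \<and> (\<forall>s t i j k. s < t \<and> i \<ge> 1 \<and> j \<ge> 1 \<and> k \<ge> 1 \<longrightarrow> P s t i j k = P s t j i k)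
    \<and> (\<forall>s t i j. s < t \<and> i \<ge> 1 \<and> j \<ge> 1 \<longrightarrow>
         (\<forall>k\<ge>1. P s t i j k \<ge> 0) \<and> (\<lambda>k. P s t i j k) summable_on {1..}
         \<and> (\<Sum>\<^sub>\<infinity>k\<in>{1..}. P s t i j k) = 1)"

definition qsp_typeA :: "(nat \<Rightarrow> nat \<Rightarrow> nat \<Rightarrow> nat \<Rightarrow> nat \<Rightarrow> real) \<Rightarrow> (nat \<Rightarrow> real) \<Rightarrow> bool" where
  "qsp_typeA P x0 \<longleftrightarrow> qsp_basic P x0 \<and>
    (\<forall>s r t i j k. s < r \<and> r < t \<and> i \<ge> 1 \<and> j \<ge> 1 \<and> k \<ge> 1 \<longrightarrow>
       P s t i j k = (\<Sum>\<^sub>\<infinity>(m,l)\<in>{1..}\<times>{1..}. P s r i j m * P r t m l k * qsp_state P x0 r l))"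

definition qsp_typeB :: "(nat \<Rightarrow> nat \<Rightarrow> nat \<Rightarrow> nat \<Rightarrow> nat \<Rightarrow> real) \<Rightarrow> (nat \<Rightarrow> real) \<Rightarrow> bool" where
  "qsp_typeB P x0 \<longleftrightarrow> qsp_basic P x0 \<and>
    (\<forall>s r t i j k. s < r \<and> r < t \<and> i \<ge> 1 \<and> j \<ge> 1 \<and> k \<ge> 1 \<longrightarrow>
       P s t i j k = (\<Sum>\<^sub>\<infinity>((m,l),(g,h))\<in>({1..}\<times>{1..})\<times>({1..}\<times>{1..}).
          P s r i m l * P s r j g h * P r t l h k * qsp_state P x0 s m * qsp_state P x0 s g))"

definition qsp_H :: "(nat \<Rightarrow> nat \<Rightarrow> nat \<Rightarrow> nat \<Rightarrow> nat \<Rightarrow> real) \<Rightarrow> (nat \<Rightarrow> real) \<Rightarrow> nat \<Rightarrow> nat \<Rightarrow> nat \<Rightarrow> nat \<Rightarrow> real" where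
  "qsp_H P x0 m n i j = (\<Sum>\<^sub>\<infinity>l\<in>{1..}. P m n i l j * qsp_state P x0 m l)"

definition stochastic_matrix :: "(nat \<Rightarrow> nat \<Rightarrow> real) \<Rightarrow> bool" where
  "stochastic_matrix A \<longleftrightarrow> (\<forall>i\<ge>1. \<forall>j\<ge>1. A i j \<ge> 0)
     \<and> (\<forall>i\<ge>1. (\<lambda>j. A i j) summable_on {1..} \<and> (\<Sum>\<^sub>\<infinity>j\<in>{1..}. A i j) = 1)"

end

theory Submission
  imports Defs
begin

text \<open>
  Every sum involved has nonnegative terms, so it may be regrouped and reordered freely
  (Tonelli); summability always comes from dominating a summand by the same expression
  with one factor P \<le> 1 dropped.

  Type (A): substituting the identity for P^[m,l]_{ip,j} into H^{m,l}_{ij} and summing over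
  p first gives sum_k H^{m,n}_{ik} H^{n,l}_{kj} at once.

  Type (B): summing out the inner indices turns the identity into
  P^[s,t]_{ij,k} = sum_{b,h} H^{s,r}_{ib} H^{s,r}_{jh} P^[r,t]_{bh,k}. With s = 0 this gives the
  evolution of the state, x^(n)_h = sum_p x^(m)_p H^{m,n}_{ph}; with s = m the sum over p in
  H^{m,l}_{ij} collapses by that evolution to sum_{b,h} H^{m,n}_{ib} P^[n,l]_{bh,j} x^(n)_h,
  which is sum_b H^{m,n}_{ib} H^{n,l}_{bj}.
\<close>

lemma has_sum_Sigma_nonneg:
  fixes f :: "'a \<Rightarrow> 'b \<Rightarrow> real"
  assumes "\<And>a b. a \<in> A \<Longrightarrow> b \<in> B \<Longrightarrow> 0 \<le> f a b"
    and "\<And>a. a \<in> A \<Longrightarrow> (f a has_sum g a) B" and "(g has_sum s) A"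
  shows "((\<lambda>(a, b). f a b) has_sum s) (A \<times> B)"
proof (rule has_sum_SigmaI[where g = g])
  show "(\<lambda>(a, b). f a b) summable_on A \<times> B"
    by (rule summable_on_SigmaI[where g = g]) (use assms in \<open>auto simp: summable_on_def\<close>)
qed (use assms in auto)

lemma has_sum_swap_nonneg:
  fixes f :: "'a \<Rightarrow> 'b \<Rightarrow> real"
  assumes "\<And>a b. a \<in> A \<Longrightarrow> b \<in> B \<Longrightarrow> 0 \<le> f a b"
    and "\<And>a. a \<in> A \<Longrightarrow> (f a has_sum g a) B" and "(g has_sum s) A"
    and cols: "\<And>b. b \<in> B \<Longrightarrow> ((\<lambda>a. f a b) has_sum h b) A"
  shows "(h has_sum s) B"
proof -
  have "((\<lambda>(a, b). f a b) has_sum s) (A \<times> B)"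
    by (rule has_sum_Sigma_nonneg) fact+
  then have "((\<lambda>(b, a). f a b) has_sum s) (B \<times> A)"
    by (subst (asm) has_sum_swap) simp
  then show ?thesis
    by (rule has_sum_SigmaD) (use cols in auto)
qed

lemma has_sum_product_nonneg:
  fixes f :: "'a \<Rightarrow> real" and g :: "'b \<Rightarrow> real"
  assumes "(f has_sum s) A" "(g has_sum t) B"
    and "\<And>a. a \<in> A \<Longrightarrow> 0 \<le> f a" "\<And>b. b \<in> B \<Longrightarrow> 0 \<le> g b"
  shows "((\<lambda>(a, b). f a * g b) has_sum s * t) (A \<times> B)"
  by (rule has_sum_Sigma_nonneg[where g = "\<lambda>a. f a * t"])
     (use assms in \<open>auto intro: has_sum_cmult_left has_sum_cmult_right\<close>)

lemma summable_on_mult_le_one: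
  fixes f c g :: "'a \<Rightarrow> real"
  assumes "f summable_on A" "\<And>x. x \<in> A \<Longrightarrow> 0 \<le> f x"
    and "\<And>x. x \<in> A \<Longrightarrow> 0 \<le> c x" "\<And>x. x \<in> A \<Longrightarrow> c x \<le> 1"
    and "\<And>x. x \<in> A \<Longrightarrow> g x = c x * f x"
  shows "g summable_on A"
  by (rule summable_on_comparison_test[OF assms(1)])
     (use assms in \<open>auto intro: mult_left_le_one_le\<close>)

locale qsp =
  fixes P :: "nat \<Rightarrow> nat \<Rightarrow> nat \<Rightarrow> nat \<Rightarrow> nat \<Rightarrow> real" and x0 :: "nat \<Rightarrow> real"
  assumes basic: "qsp_basic P x0"
begin

abbreviation state :: "nat \<Rightarrow> nat \<Rightarrow> real" where "state \<equiv> qsp_state P x0"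
abbreviation H :: "nat \<Rightarrow> nat \<Rightarrow> nat \<Rightarrow> nat \<Rightarrow> real" where "H \<equiv> qsp_H P x0"

lemma P_has_sum: "s < t \<Longrightarrow> i \<ge> 1 \<Longrightarrow> j \<ge> 1 \<Longrightarrow> ((\<lambda>k. P s t i j k) has_sum 1) {1..}"
  using basic unfolding qsp_basic_def by (metis has_sum_infsum)

lemma P_nonneg: "s < t \<Longrightarrow> i \<ge> 1 \<Longrightarrow> j \<ge> 1 \<Longrightarrow> k \<ge> 1 \<Longrightarrow> 0 \<le> P s t i j k"
  using basic unfolding qsp_basic_def by blast

lemma P_le_one:
  assumes "s < t" "i \<ge> 1" "j \<ge> 1" "k \<ge> 1"
  shows "P s t i j k \<le> 1"
  using finite_sum_le_has_sum[OF P_has_sum, of s t i j "{k}"] P_nonneg assms by simp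

lemma x0_has_sum: "(x0 has_sum 1) {1..}"
  using basic unfolding qsp_basic_def simplex_S_def by (metis has_sum_infsum)

lemma x0_nonneg: "k \<ge> 1 \<Longrightarrow> 0 \<le> x0 k"
  using basic unfolding qsp_basic_def simplex_S_def by blast

lemma state_0 [simp]: "state 0 = x0"
  by (simp add: qsp_state_def fun_eq_iff)

lemma state_has_sum_pairs:
  assumes "0 < r" "k \<ge> 1"
  shows "((\<lambda>(i, j). P 0 r i j k * x0 i * x0 j) has_sum state r k) ({1..} \<times> {1..})"
proof -
  have "((\<lambda>(i, j). x0 i * x0 j) has_sum 1 * 1) ({1..} \<times> {1..})"
    by (rule has_sum_product_nonneg) (use x0_has_sum x0_nonneg in auto)
  then have "(\<lambda>(i, j). P 0 r i j k * x0 i * x0 j) summable_on {1..} \<times> {1..}"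
    by (rule summable_on_mult_le_one[OF has_sum_imp_summable, where c = "\<lambda>(i, j). P 0 r i j k"])
       (use assms in \<open>auto simp: P_nonneg P_le_one x0_nonneg\<close>)
  then show ?thesis
    using assms by (simp add: qsp_state_def has_sum_infsum)
qed

lemma state_nonneg: "k \<ge> 1 \<Longrightarrow> 0 \<le> state r k"
  unfolding qsp_state_def
  by (auto intro!: infsum_nonneg mult_nonneg_nonneg P_nonneg x0_nonneg)

lemma state_has_sum: "(state r has_sum 1) {1..}"
proof (cases "r = 0")
  case False
  show ?thesis
  proof (rule has_sum_swap_nonneg[where f = "\<lambda>(i, j) k. P 0 r i j k * x0 i * x0 j"])
    show "((\<lambda>(i, j). x0 i * x0 j) has_sum 1) ({1..} \<times> {1..})"
      using has_sum_product_nonneg[OF x0_has_sum x0_has_sum] x0_nonneg by simp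
    fix a :: "nat \<times> nat"
    assume "a \<in> {1..} \<times> {1..}"
    then obtain i j where a: "a = (i, j)" "i \<ge> 1" "j \<ge> 1" by auto
    from has_sum_cmult_left[OF P_has_sum[of 0 r i j], of "x0 i * x0 j"]
    show "((\<lambda>(i, j) k. P 0 r i j k * x0 i * x0 j) a has_sum (\<lambda>(i, j). x0 i * x0 j) a) {1..}"
      using a False by (simp add: mult.assoc)
  next
    show "((\<lambda>a. (\<lambda>(i, j) k. P 0 r i j k * x0 i * x0 j) a k) has_sum state r k) ({1..} \<times> {1..})"
      if "k \<in> {1..}" for k
      using state_has_sum_pairs[of r k] that False by (simp add: case_prod_unfold)
  qed (use False in \<open>auto intro!: mult_nonneg_nonneg P_nonneg x0_nonneg\<close>)
qed (use x0_has_sum in simp)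

lemma H_has_sum:
  assumes "m < n" "i \<ge> 1" "j \<ge> 1"
  shows "((\<lambda>l. P m n i l j * state m l) has_sum H m n i j) {1..}"
proof -
  have "(\<lambda>l. P m n i l j * state m l) summable_on {1..}"
    by (rule summable_on_mult_le_one[OF has_sum_imp_summable[OF state_has_sum]])
       (use assms in \<open>auto simp: P_nonneg P_le_one state_nonneg\<close>)
  then show ?thesis
    unfolding qsp_H_def by (rule has_sum_infsum)
qed

lemma H_nonneg: "m < n \<Longrightarrow> i \<ge> 1 \<Longrightarrow> j \<ge> 1 \<Longrightarrow> 0 \<le> H m n i j"
  unfolding qsp_H_def by (auto intro!: infsum_nonneg simp: P_nonneg state_nonneg)

lemma P_times_state_has_sum:
  assumes "s < r" "i \<ge> 1"
  shows "((\<lambda>(a, b). P s r i a b * state s a) has_sum 1) ({1..} \<times> {1..})"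
proof (rule has_sum_Sigma_nonneg[OF _ _ state_has_sum])
  show "((\<lambda>b. P s r i a b * state s a) has_sum state s a) {1..}" if "a \<in> {1..}" for a
    using has_sum_cmult_left[OF P_has_sum, of s r i a "state s a"] assms that by simp
qed (use assms in \<open>auto simp: P_nonneg state_nonneg\<close>)

lemma H_row_has_sum:
  assumes "m < n" "i \<ge> 1"
  shows "((\<lambda>j. H m n i j) has_sum 1) {1..}"
proof -
  have "((\<lambda>(j, l). P m n i l j * state m l) has_sum 1) ({1..} \<times> {1..})"
    using P_times_state_has_sum[OF assms] by (subst has_sum_swap) simp
  then show ?thesis
    by (rule has_sum_SigmaD) (use assms H_has_sum in auto)
qed

lemma stochastic_matrix_H:
  assumes "m < n"
  shows "stochastic_matrix (H m n)"
proof -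
  have "(\<lambda>j. H m n i j) summable_on {1..} \<and> (\<Sum>\<^sub>\<infinity>j\<in>{1..}. H m n i j) = 1" if "i \<ge> 1" for i
    using H_row_has_sum[OF assms that] by (auto dest: has_sum_imp_summable infsumI)
  then show ?thesis
    unfolding stochastic_matrix_def using H_nonneg assms by auto
qed

lemma has_sum_state_H_of_pairs:
  assumes "m < n" "k \<ge> 1"
    and "((\<lambda>(p, g). P m n p g k * state m p * state m g) has_sum y) ({1..} \<times> {1..})"
  shows "((\<lambda>p. state m p * H m n p k) has_sum y) {1..}"
proof (rule has_sum_SigmaD[OF assms(3)])
  show "((\<lambda>g. (\<lambda>(p, g). P m n p g k * state m p * state m g) (p, g))
      has_sum state m p * H m n p k) {1..}"
    if "p \<in> {1..}" for p
    using has_sum_cmult_right[OF H_has_sum, of m n p k "state m p"] assms that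
    by (simp add: mult_ac)
qed

lemma x0_H_has_sum: "0 < n \<Longrightarrow> k \<ge> 1 \<Longrightarrow> ((\<lambda>p. x0 p * H 0 n p k) has_sum state n k) {1..}"
  using has_sum_state_H_of_pairs[of 0 n k] state_has_sum_pairs by simp

end

locale qsp_A =
  fixes P :: "nat \<Rightarrow> nat \<Rightarrow> nat \<Rightarrow> nat \<Rightarrow> nat \<Rightarrow> real" and x0 :: "nat \<Rightarrow> real"
  assumes typeA: "qsp_typeA P x0"

sublocale qsp_A \<subseteq> qsp
  using typeA by unfold_locales (simp add: qsp_typeA_def)

context qsp_A
begin

lemma P_typeA:
  "s < r \<Longrightarrow> r < t \<Longrightarrow> i \<ge> 1 \<Longrightarrow> j \<ge> 1 \<Longrightarrow> k \<ge> 1 \<Longrightarrow>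
    P s t i j k = (\<Sum>\<^sub>\<infinity>(m, l)\<in>{1..} \<times> {1..}. P s r i j m * P r t m l k * state r l)"
  using typeA unfolding qsp_typeA_def by (elim conjE allE impE) auto

lemma P_typeA_has_sum:
  assumes "m < n" "n < l" "i \<ge> 1" "p \<ge> 1" "j \<ge> 1"
  shows "((\<lambda>a. P m n i p a * H n l a j) has_sum P m l i p j) {1..}"
proof -
  let ?f = "\<lambda>(a, b). P m n i p a * P n l a b j * state n b"
  have "((\<lambda>(a, b). P m n i p a * state n b) has_sum 1 * 1) ({1..} \<times> {1..})"
    by (rule has_sum_product_nonneg[OF P_has_sum state_has_sum])
       (use assms in \<open>auto simp: P_nonneg state_nonneg\<close>)
  then have summable: "?f summable_on {1..} \<times> {1..}"
    by (rule summable_on_mult_le_one[OF has_sum_imp_summable, where c = "\<lambda>(a, b). P n l a b j"])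
       (use assms in \<open>auto simp: P_nonneg P_le_one state_nonneg\<close>)
  have "P m l i p j = infsum ?f ({1..} \<times> {1..})"
    by (rule P_typeA) (use assms in auto)
  then have "(?f has_sum P m l i p j) ({1..} \<times> {1..})"
    using has_sum_infsum[OF summable] by simp
  then show ?thesis
  proof (rule has_sum_SigmaD)
    show "((\<lambda>b. ?f (a, b)) has_sum P m n i p a * H n l a j) {1..}" if "a \<in> {1..}" for a
      using has_sum_cmult_right[OF H_has_sum, of n l a j "P m n i p a"] assms that
      by (simp add: mult.assoc)
  qed
qed

lemma H_chapman_kolmogorov:
  assumes "m < n" "n < l" "i \<ge> 1" "j \<ge> 1"
  shows "((\<lambda>k. H m n i k * H n l k j) has_sum H m l i j) {1..}"
proof (rule has_sum_swap_nonneg[where f = "\<lambda>p k. state m p * (P m n i p k * H n l k j)"])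
  show "((\<lambda>k. state m p * (P m n i p k * H n l k j)) has_sum state m p * P m l i p j) {1..}"
    if "p \<in> {1..}" for p
    using has_sum_cmult_right[OF P_typeA_has_sum[of m n l i p j]] assms that by simp
  show "((\<lambda>p. state m p * P m l i p j) has_sum H m l i j) {1..}"
    using H_has_sum[of m l i j] assms by (simp add: mult.commute)
  show "((\<lambda>p. state m p * (P m n i p k * H n l k j)) has_sum H m n i k * H n l k j) {1..}"
    if "k \<in> {1..}" for k
    using has_sum_cmult_left[OF H_has_sum[of m n i k], of "H n l k j"] assms that
    by (simp add: mult_ac)
qed (use assms in \<open>auto simp: P_nonneg state_nonneg H_nonneg\<close>)

end

locale qsp_B =
  fixes P :: "nat \<Rightarrow> nat \<Rightarrow> nat \<Rightarrow> nat \<Rightarrow> nat \<Rightarrow> real" and x0 :: "nat \<Rightarrow> real"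
  assumes typeB: "qsp_typeB P x0"

sublocale qsp_B \<subseteq> qsp
  using typeB by unfold_locales (simp add: qsp_typeB_def)

context qsp_B
begin

lemma P_typeB:
  "s < r \<Longrightarrow> r < t \<Longrightarrow> i \<ge> 1 \<Longrightarrow> j \<ge> 1 \<Longrightarrow> k \<ge> 1 \<Longrightarrow>
    P s t i j k = (\<Sum>\<^sub>\<infinity>((a, b), (g, h))\<in>({1..} \<times> {1..}) \<times> ({1..} \<times> {1..}).
      P s r i a b * P s r j g h * P r t b h k * state s a * state s g)"
  using typeB unfolding qsp_typeB_def by (elim conjE allE impE) auto

lemma P_typeB_has_sum_quadruples:
  assumes "s < r" "r < t" "i \<ge> 1" "j \<ge> 1" "k \<ge> 1"
  shows "((\<lambda>((a, b), (g, h)). P s r i a b * P s r j g h * P r t b h k * state s a * state s g)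
    has_sum P s t i j k) (({1..} \<times> {1..}) \<times> ({1..} \<times> {1..}))"
    (is "(?f has_sum _) ?D")
proof -
  have "((\<lambda>(u, v). (\<lambda>(a, b). P s r i a b * state s a) u * (\<lambda>(g, h). P s r j g h * state s g) v)
      has_sum 1 * 1) ?D"
    by (rule has_sum_product_nonneg[OF P_times_state_has_sum P_times_state_has_sum])
       (use assms in \<open>auto simp: P_nonneg state_nonneg\<close>)
  then have summable: "?f summable_on ?D"
    by (rule summable_on_mult_le_one[OF has_sum_imp_summable,
          where c = "\<lambda>((a, b), (g, h)). P r t b h k"])
       (use assms in \<open>auto simp: P_nonneg P_le_one state_nonneg mult_ac\<close>)
  have "P s t i j k = infsum ?f ?D"
    by (rule P_typeB) (use assms in auto)
  then show ?thesis
    using has_sum_infsum[OF summable] by simp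
qed

lemma P_typeB_has_sum:
  assumes "s < r" "r < t" "i \<ge> 1" "j \<ge> 1" "k \<ge> 1"
  shows "((\<lambda>(b, h). H s r i b * H s r j h * P r t b h k) has_sum P s t i j k) ({1..} \<times> {1..})"
proof -
  let ?f = "\<lambda>((a, b), (g, h)). P s r i a b * P s r j g h * P r t b h k * state s a * state s g"
  let ?D = "({1..} \<times> {1..}) \<times> ({1..} \<times> {1..}) :: ((nat \<times> nat) \<times> (nat \<times> nat)) set"
  have "((\<lambda>((b, h), (a, g)). ?f ((a, b), (g, h))) has_sum P s t i j k) ?D
      \<longleftrightarrow> (?f has_sum P s t i j k) ?D"
    by (rule has_sum_reindex_bij_witness[where j = "\<lambda>((b, h), (a, g)). ((a, b), (g, h))"
          and i = "\<lambda>((a, b), (g, h)). ((b, h), (a, g))"]) auto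
  with P_typeB_has_sum_quadruples[OF assms]
  have "((\<lambda>((b, h), (a, g)). ?f ((a, b), (g, h))) has_sum P s t i j k) ?D"
    by simp
  then show ?thesis
  proof (rule has_sum_SigmaD)
    fix v :: "nat \<times> nat"
    assume "v \<in> {1..} \<times> {1..}"
    then obtain b h where v: "v = (b, h)" "b \<ge> 1" "h \<ge> 1" by auto
    have "((\<lambda>(a, g). (P s r i a b * state s a) * (P s r j g h * state s g))
        has_sum H s r i b * H s r j h) ({1..} \<times> {1..})"
      by (rule has_sum_product_nonneg[OF H_has_sum H_has_sum])
         (use assms v in \<open>auto simp: P_nonneg state_nonneg\<close>)
    from has_sum_cmult_left[OF this, of "P r t b h k"]
    show "((\<lambda>u. (\<lambda>((b, h), (a, g)). ?f ((a, b), (g, h))) (v, u))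
        has_sum (\<lambda>(b, h). H s r i b * H s r j h * P r t b h k) v) ({1..} \<times> {1..})"
      using v by (simp add: case_prod_unfold mult_ac)
  qed
qed

lemma state_evolution:
  assumes "m < n" "k \<ge> 1"
  shows "((\<lambda>(p, g). P m n p g k * state m p * state m g) has_sum state n k) ({1..} \<times> {1..})"
proof (cases "m = 0")
  case True
  then show ?thesis using state_has_sum_pairs assms by simp
next
  case False
  \<comment> \<open>expand x^(n) from time 0, passing through the intermediate time m\<close>
  show ?thesis
  proof (rule has_sum_swap_nonneg
      [where f = "\<lambda>(i, j) (b, h). x0 i * x0 j * (H 0 m i b * H 0 m j h * P m n b h k)"])
    fix u :: "nat \<times> nat"
    assume "u \<in> {1..} \<times> {1..}"
    then obtain i j where u: "u = (i, j)" "i \<ge> 1" "j \<ge> 1" by auto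
    from has_sum_cmult_right[OF P_typeB_has_sum[of 0 m n i j k], of "x0 i * x0 j"]
    show "((\<lambda>(i, j) (b, h). x0 i * x0 j * (H 0 m i b * H 0 m j h * P m n b h k)) u has_sum
        (\<lambda>(i, j). x0 i * x0 j * P 0 n i j k) u) ({1..} \<times> {1..})"
      using u False assms by (simp add: case_prod_unfold)
  next
    show "((\<lambda>(i, j). x0 i * x0 j * P 0 n i j k) has_sum state n k) ({1..} \<times> {1..})"
      using state_has_sum_pairs[of n k] assms by (simp add: case_prod_unfold mult_ac)
  next
    fix v :: "nat \<times> nat"
    assume "v \<in> {1..} \<times> {1..}"
    then obtain b h where v: "v = (b, h)" "b \<ge> 1" "h \<ge> 1" by auto
    have "((\<lambda>(i, j). (x0 i * H 0 m i b) * (x0 j * H 0 m j h))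
        has_sum state m b * state m h) ({1..} \<times> {1..})"
      by (rule has_sum_product_nonneg[OF x0_H_has_sum x0_H_has_sum])
         (use False v in \<open>auto simp: x0_nonneg H_nonneg\<close>)
    from has_sum_cmult_right[OF this, of "P m n b h k"]
    show "((\<lambda>u. (\<lambda>(i, j) (b, h). x0 i * x0 j * (H 0 m i b * H 0 m j h * P m n b h k)) u v) has_sum
        (\<lambda>(p, g). P m n p g k * state m p * state m g) v) ({1..} \<times> {1..})"
      using v by (simp add: case_prod_unfold mult_ac)
  qed (use False assms in \<open>auto simp: x0_nonneg H_nonneg P_nonneg\<close>)
qed

lemma state_H_has_sum:
  "m < n \<Longrightarrow> k \<ge> 1 \<Longrightarrow> ((\<lambda>p. state m p * H m n p k) has_sum state n k) {1..}"
  by (rule has_sum_state_H_of_pairs[OF _ _ state_evolution])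

lemma H_chapman_kolmogorov:
  assumes "m < n" "n < l" "i \<ge> 1" "j \<ge> 1"
  shows "((\<lambda>k. H m n i k * H n l k j) has_sum H m l i j) {1..}"
proof -
  have "((\<lambda>(b, h). H m n i b * P n l b h j * state n h) has_sum H m l i j) ({1..} \<times> {1..})"
  proof (rule has_sum_swap_nonneg
      [where f = "\<lambda>p (b, h). state m p * (H m n i b * H m n p h * P n l b h j)"])
    show "((\<lambda>(b, h). state m p * (H m n i b * H m n p h * P n l b h j))
        has_sum state m p * P m l i p j) ({1..} \<times> {1..})" if "p \<in> {1..}" for p
      using has_sum_cmult_right[OF P_typeB_has_sum[of m n l i p j], of "state m p"] assms that
      by (simp add: case_prod_unfold)
    show "((\<lambda>p. state m p * P m l i p j) has_sum H m l i j) {1..}"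
      using H_has_sum[of m l i j] assms by (simp add: mult.commute)
  next
    fix v :: "nat \<times> nat"
    assume "v \<in> {1..} \<times> {1..}"
    then obtain b h where v: "v = (b, h)" "b \<ge> 1" "h \<ge> 1" by auto
    from has_sum_cmult_left[OF state_H_has_sum[of m n h], of "H m n i b * P n l b h j"]
    show "((\<lambda>p. (\<lambda>p (b, h). state m p * (H m n i b * H m n p h * P n l b h j)) p v) has_sum
        (\<lambda>(b, h). H m n i b * P n l b h j * state n h) v) {1..}"
      using v assms by (simp add: mult_ac)
  qed (use assms in \<open>auto simp: state_nonneg H_nonneg P_nonneg\<close>)
  then show ?thesis
  proof (rule has_sum_SigmaD)
    show "((\<lambda>h. (\<lambda>(b, h). H m n i b * P n l b h j * state n h) (b, h))
        has_sum H m n i b * H n l b j) {1..}"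
      if "b \<in> {1..}" for b
      using has_sum_cmult_right[OF H_has_sum[of n l b j], of "H m n i b"] assms that
      by (simp add: mult.assoc)
  qed
qed

end

theorem lemma2p3:
  fixes P :: "nat \<Rightarrow> nat \<Rightarrow> nat \<Rightarrow> nat \<Rightarrow> nat \<Rightarrow> real" and x0 :: "nat \<Rightarrow> real"
  assumes "qsp_typeA P x0 \<or> qsp_typeB P x0"
  shows "(\<forall>m n. m < n \<longrightarrow> stochastic_matrix (qsp_H P x0 m n))
    \<and> (\<forall>m n l i j. m < n \<and> n < l \<and> i \<ge> 1 \<and> j \<ge> 1 \<longrightarrow>
         qsp_H P x0 m l i j = (\<Sum>\<^sub>\<infinity>k\<in>{1..}. qsp_H P x0 m n i k * qsp_H P x0 n l k j))"
proof -
  interpret qsp P x0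
    using assms by unfold_locales (auto simp: qsp_typeA_def qsp_typeB_def)
  have "((\<lambda>k. H m n i k * H n l k j) has_sum H m l i j) {1..}"
    if "m < n" "n < l" "i \<ge> 1" "j \<ge> 1" for m n l i j
    using assms that qsp_A.H_chapman_kolmogorov[OF qsp_A.intro]
      qsp_B.H_chapman_kolmogorov[OF qsp_B.intro]
    by blast
  then show ?thesis
    using stochastic_matrix_H by (auto intro: infsumI[symmetric])
qed

end
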